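(* Consider the planar Problem B with $w=e=(0,1)$ (see context), on a closed interval $D\subset(-\pi/2,\pi/2)$. If $(\rho,C_r,C_b,\varphi)$ solves it, then $0\in D$, $\varphi(0)=0$, $d_b(0)=d_r(0)$, and $\rho'(0)=0$.
   Context: Planar setting: $x(t)=(\sin t,\cos t)$ for $t\in D$, a closed interval in $(-\pi/2,\pi/2)$; $e=(0,1)$; refractive indices $n_b>n_r>1$, outside vacuum; $\Phi_\kappa(s)=s-\sqrt{\kappa^2-1+s^2}$. For positive $\rho\in C^2(D)$, the curve $\rho(t)x(t)$ has outer unit normal $\nu_\rho(t)=\dfrac{(\rho\sin t-\rho'\cos t,\ \rho'\sin t+\rho\cos t)}{\sqrt{\rho^2+\rho'^2}}$. For $c\in\{r,b\}$ and a constant $C_c$: $m_c(t)=\frac1{n_c}\big(x(t)-\Phi_{n_c}(x(t)\cdot\nu_\rho(t))\nu_\rho(t)\big)$, $d_c(t)=\dfrac{C_c-\rho(t)(1-\cos t)}{n_c-e\cdot m_c(t)}$, $f_c(t)=\rho(t)x(t)+d_c(t)m_c(t)$; the curve $f_c$ refracts the color-$c$ ray $m_c(t)$ at $f_c(t)$ into $e$ by Snell's law (index $n_c$ to $1$). A solution of Problem B on $D$: positive $\rho\in C^2(D)$, constants $C_r,C_b$ with $d_r,d_b>0$ and $f_r,f_b$ regular curves, and a $C^1$ map $\varphi:D\to D$ with $f_r(t)=f_b(\varphi(t))$ for all $t\in D$. *)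

theory Defs
  imports "HOL-Analysis.Analysis"
begin

text \<open>Planar setting: points of the plane are pairs (real, real) with the
standard inner product. The derivative rho' of rho is passed explicitly.\<close>

definition xdir :: "real \<Rightarrow> real \<times> real" where
  "xdir t = (sin t, cos t)"

definition evec :: "real \<times> real" where
  "evec = (0, 1)"

definition Phi :: "real \<Rightarrow> real \<Rightarrow> real" where
  "Phi \<kappa> s = s - sqrt (\<kappa>\<^sup>2 - 1 + s\<^sup>2)"

text \<open>Outer unit normal of the curve rho(t) x(t); rho' is the derivative of rho.\<close>
definition nu :: "(real \<Rightarrow> real) \<Rightarrow> (real \<Rightarrow> real) \<Rightarrow> real \<Rightarrow> real \<times> real" where
  "nu \<rho> \<rho>' t = (1 / sqrt ((\<rho> t)\<^sup>2 + (\<rho>' t)\<^sup>2)) *\<^sub>R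
      (\<rho> t * sin t - \<rho>' t * cos t, \<rho>' t * sin t + \<rho> t * cos t)"

definition mC :: "real \<Rightarrow> (real \<Rightarrow> real) \<Rightarrow> (real \<Rightarrow> real) \<Rightarrow> real \<Rightarrow> real \<times> real" where
  "mC n \<rho> \<rho>' t = (1 / n) *\<^sub>R
      (xdir t - Phi n (xdir t \<bullet> nu \<rho> \<rho>' t) *\<^sub>R nu \<rho> \<rho>' t)"

definition dC :: "real \<Rightarrow> real \<Rightarrow> (real \<Rightarrow> real) \<Rightarrow> (real \<Rightarrow> real) \<Rightarrow> real \<Rightarrow> real" where
  "dC n C \<rho> \<rho>' t = (C - \<rho> t * (1 - cos t)) / (n - evec \<bullet> mC n \<rho> \<rho>' t)"

definition fC :: "real \<Rightarrow> real \<Rightarrow> (real \<Rightarrow> real) \<Rightarrow> (real \<Rightarrow> real) \<Rightarrow> real \<Rightarrow> real \<times> real" where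
  "fC n C \<rho> \<rho>' t = \<rho> t *\<^sub>R xdir t + dC n C \<rho> \<rho>' t *\<^sub>R mC n \<rho> \<rho>' t"

definition regular_curve_on :: "real set \<Rightarrow> (real \<Rightarrow> real \<times> real) \<Rightarrow> bool" where
  "regular_curve_on D f \<longleftrightarrow> (\<exists>f'. (\<forall>t\<in>D. (f has_vector_derivative f' t) (at t within D) \<and> f' t \<noteq> 0)
      \<and> continuous_on D f')"

definition C1_on :: "real set \<Rightarrow> (real \<Rightarrow> real) \<Rightarrow> bool" where
  "C1_on D g \<longleftrightarrow> (\<exists>g'. (\<forall>t\<in>D. (g has_real_derivative g' t) (at t within D)) \<and> continuous_on D g')"

end

theory Submission imports Defs begin

(* A continuous self-map phi of D has a fixed point t0 (Brouwer), where f_r and f_b pass through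
   the same point rho x + d_r m_r = rho x + d_b m_b; as the m_c are unit vectors, d_r = d_b and
   m_r = m_b =: m. Fermat's principle (the optical path rho + n_c d_c - e.f_c is the constant C_c)
   makes n_c m - e orthogonal to the velocity of f_c. Since f_r = f_b o phi, both velocities at t0
   are parallel, so m and e are orthogonal to the same nonzero vector: m is vertical. Finally
   m_r = m_b with n_r <> n_b forces x(t0) to be parallel to the normal, which means rho'(t0) = 0;
   then m is parallel to x(t0), and verticality gives t0 = 0. *)

lemma norm_xdir [simp]: "norm (xdir t) = 1"
  by (simp add: xdir_def norm_Pair)

lemma norm_nu:
  assumes "\<rho> t \<noteq> 0"
  shows "norm (nu \<rho> \<rho>' t) = 1"
proof -
  have "(\<rho> t * sin t - \<rho>' t * cos t)\<^sup>2 + (\<rho>' t * sin t + \<rho> t * cos t)\<^sup>2 = (\<rho> t)\<^sup>2 + (\<rho>' t)\<^sup>2"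
    using sin_cos_squared_add[of t] by algebra
  moreover have "0 < (\<rho> t)\<^sup>2 + (\<rho>' t)\<^sup>2"
    using assms by (simp add: add_pos_nonneg)
  ultimately show ?thesis
    unfolding nu_def norm_scaleR using assms by (simp add: norm_Pair)
qed

lemma norm_refracted_direction:
  fixes x v :: "'a::real_inner"
  assumes "norm x = 1" "norm v = 1" "1 \<le> n"
  shows "norm ((1/n) *\<^sub>R (x - Phi n (x \<bullet> v) *\<^sub>R v)) = 1"
proof -
  define s where "s = x \<bullet> v"
  have "\<bar>s\<bar> \<le> 1"
    using Cauchy_Schwarz_ineq2[of x v] assms by (simp add: s_def)
  then have root: "(sqrt (n\<^sup>2 - 1 + s\<^sup>2))\<^sup>2 = n\<^sup>2 - 1 + s\<^sup>2"
    using assms(3) by (simp add: power_mono)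
  have unit: "x \<bullet> x = 1" "v \<bullet> v = 1"
    using assms by (simp_all flip: power2_norm_eq_inner)
  have "(norm (x - Phi n s *\<^sub>R v))\<^sup>2 = (x - Phi n s *\<^sub>R v) \<bullet> (x - Phi n s *\<^sub>R v)"
    by (rule power2_norm_eq_inner)
  also have "\<dots> = x \<bullet> x - 2 * Phi n s * s + (Phi n s)\<^sup>2 * (v \<bullet> v)"
    by (simp add: inner_diff inner_commute s_def power2_eq_square algebra_simps)
  also have "\<dots> = n\<^sup>2"
    using unit root by (simp add: Phi_def power2_eq_square algebra_simps)
  finally have "norm (x - Phi n s *\<^sub>R v) = n"
    using assms(3) by (simp add: power2_eq_iff_nonneg)
  then show ?thesis
    using assms(3) by (simp add: s_def)
qed

lemma norm_mC: "\<rho> t \<noteq> 0 \<Longrightarrow> 1 \<le> n \<Longrightarrow> norm (mC n \<rho> \<rho>' t) = 1"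
  unfolding mC_def by (rule norm_refracted_direction[OF norm_xdir norm_nu])

lemma has_real_derivative_norm:
  fixes g :: "real \<Rightarrow> 'a::real_inner"
  assumes "(g has_vector_derivative g') (at t within S)" "g t \<noteq> 0"
  shows "((\<lambda>s. norm (g s)) has_real_derivative (g t \<bullet> g') / norm (g t)) (at t within S)"
proof -
  have "((\<lambda>s. norm (g s)) has_derivative (\<lambda>h. sgn (g t) \<bullet> (h *\<^sub>R g'))) (at t within S)"
    using has_derivative_compose[OF assms(1)[unfolded has_vector_derivative_def] has_derivative_norm[OF assms(2)]]
    by (simp add: o_def) (metis inner_commute)
  moreover have "(\<lambda>h. sgn (g t) \<bullet> (h *\<^sub>R g')) = (*) ((g t \<bullet> g') / norm (g t))"
    by (auto simp: sgn_div_norm divide_inverse mult_ac)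
  ultimately show ?thesis
    unfolding has_field_derivative_def by simp
qed

lemma has_vector_derivative_scaleR_xdir:
  assumes "(\<rho> has_real_derivative r') (at t within S)"
  shows "((\<lambda>s. \<rho> s *\<^sub>R xdir s) has_vector_derivative r' *\<^sub>R xdir t + \<rho> t *\<^sub>R (cos t, - sin t)) (at t within S)"
proof -
  have "(xdir has_vector_derivative (cos t, - sin t)) (at t within S)"
    unfolding xdir_def
    by (auto intro!: derivative_eq_intros simp flip: has_real_derivative_iff_has_vector_derivative)
  from has_vector_derivative_scaleR[OF assms this] show ?thesis
    by (simp add: add.commute)
qed

lemma inner_mC_tangent:
  assumes "n \<noteq> 0"
  shows "n * (mC n \<rho> \<rho>' t \<bullet> (\<rho>' t *\<^sub>R xdir t + \<rho> t *\<^sub>R (cos t, - sin t))) = \<rho>' t"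
proof -
  let ?T = "\<rho>' t *\<^sub>R xdir t + \<rho> t *\<^sub>R (cos t, - sin t)"
  have "?T \<bullet> (\<rho> t * sin t - \<rho>' t * cos t, \<rho>' t * sin t + \<rho> t * cos t) = 0"
    by (simp add: xdir_def algebra_simps)
  then have "?T \<bullet> nu \<rho> \<rho>' t = 0"
    unfolding nu_def inner_scaleR_right by simp
  moreover have "?T \<bullet> xdir t = \<rho>' t * ((sin t)\<^sup>2 + (cos t)\<^sup>2)"
    by (simp add: xdir_def algebra_simps power2_eq_square
        del: sin_cos_squared_add sin_cos_squared_add2 sin_cos_squared_add3)
  ultimately show ?thesis
    using assms by (simp add: mC_def inner_diff_left inner_commute)
qed

lemma fC_optical_path:
  assumes "\<rho> t \<noteq> 0" "1 < n"
  shows "\<rho> t + n * dC n C \<rho> \<rho>' t - evec \<bullet> fC n C \<rho> \<rho>' t = C"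
proof -
  have "evec \<bullet> mC n \<rho> \<rho>' t \<le> norm evec * norm (mC n \<rho> \<rho>' t)"
    by (rule norm_cauchy_schwarz)
  then have "evec \<bullet> mC n \<rho> \<rho>' t < n"
    using assms norm_mC[of \<rho> t n \<rho>'] by (simp add: evec_def)
  then have "dC n C \<rho> \<rho>' t * (n - evec \<bullet> mC n \<rho> \<rho>' t) = C - \<rho> t * (1 - cos t)"
    by (simp add: dC_def)
  moreover have "evec \<bullet> xdir t = cos t"
    by (simp add: evec_def xdir_def)
  ultimately show ?thesis
    by (simp add: fC_def inner_add_right algebra_simps)
qed

lemma fC_velocity_orthogonal:
  assumes "a < b" and t: "t \<in> {a..b}" and n: "1 < n"
    and pos: "\<forall>s\<in>{a..b}. 0 < \<rho> s \<and> 0 < dC n C \<rho> \<rho>' s"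
    and \<rho>_deriv: "(\<rho> has_real_derivative \<rho>' t) (at t within {a..b})"
    and f_deriv: "(fC n C \<rho> \<rho>' has_vector_derivative F) (at t within {a..b})"
  shows "(n *\<^sub>R mC n \<rho> \<rho>' t - evec) \<bullet> F = 0"
proof -
  define m where "m = mC n \<rho> \<rho>' t"
  define g where "g s = fC n C \<rho> \<rho>' s - \<rho> s *\<^sub>R xdir s" for s
  define T where "T = \<rho>' t *\<^sub>R xdir t + \<rho> t *\<^sub>R (cos t, - sin t)"
  have norm_g: "norm (g s) = dC n C \<rho> \<rho>' s" if "s \<in> {a..b}" for s
  proof -
    have "0 < \<rho> s" "0 < dC n C \<rho> \<rho>' s"
      using pos that by auto
    then show ?thesis
      using norm_mC[of \<rho> s n \<rho>'] n by (simp add: g_def fC_def)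
  qed
  have g_t: "g t = norm (g t) *\<^sub>R m"
    using norm_g[OF t] by (simp add: g_def fC_def m_def)
  have "norm (g t) > 0"
    using norm_g[OF t] pos t by simp
  define L where "L s = \<rho> s + n * norm (g s) - evec \<bullet> fC n C \<rho> \<rho>' s" for s
  \<comment> \<open>Fermat's principle: the optical path length from the origin to the plane wave is constant.\<close>
  have L_const: "L s = C" if "s \<in> {a..b}" for s
  proof -
    have "\<rho> s \<noteq> 0"
      using pos that by force
    then show ?thesis
      using fC_optical_path[of \<rho> s n C \<rho>'] n norm_g[OF that] by (simp add: L_def)
  qed
  have L_deriv_0: "(L has_real_derivative 0) (at t within {a..b})"
    by (rule has_field_derivative_transform_within[where f="\<lambda>_. C" and d=1])
      (use t L_const in auto)
  have "(g has_vector_derivative F - T) (at t within {a..b})"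
    unfolding g_def T_def
    by (intro has_vector_derivative_diff f_deriv has_vector_derivative_scaleR_xdir \<rho>_deriv)
  moreover have "((\<lambda>s. evec \<bullet> fC n C \<rho> \<rho>' s) has_real_derivative evec \<bullet> F) (at t within {a..b})"
    unfolding has_real_derivative_iff_has_vector_derivative
    by (rule bounded_linear.has_vector_derivative[OF bounded_linear_inner_right f_deriv])
  ultimately have "(L has_real_derivative
      \<rho>' t + n * ((g t \<bullet> (F - T)) / norm (g t)) - evec \<bullet> F) (at t within {a..b})"
    unfolding L_def using \<open>norm (g t) > 0\<close>
    by (intro DERIV_diff DERIV_add DERIV_cmult \<rho>_deriv has_real_derivative_norm) auto
  then have "\<rho>' t + n * ((g t \<bullet> (F - T)) / norm (g t)) - evec \<bullet> F = 0"
    using vector_derivative_unique_within_closed_interval[of a b t L, unfolded cbox_interval,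
        OF \<open>a < b\<close> t] L_deriv_0
    unfolding has_real_derivative_iff_has_vector_derivative by blast
  moreover have "(g t \<bullet> (F - T)) / norm (g t) = m \<bullet> F - m \<bullet> T"
    using \<open>norm (g t) > 0\<close> by (subst g_t) (simp add: inner_diff_right field_simps)
  moreover have "n * (m \<bullet> T) = \<rho>' t"
    using inner_mC_tangent[of n \<rho> \<rho>' t] n by (simp add: m_def T_def)
  ultimately show ?thesis
    by (simp add: m_def inner_diff_left right_diff_distrib)
qed

lemma xdir_parallel_nu_imp_deriv_eq_0:
  assumes "xdir t = k *\<^sub>R nu \<rho> \<rho>' t"
  shows "\<rho>' t = 0"
proof -
  define N where "N = sqrt ((\<rho> t)\<^sup>2 + (\<rho>' t)\<^sup>2)"
  \<comment> \<open>The cross product of \<open>xdir t\<close> with the normal is \<open>\<rho>' t / N\<close>.\<close>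
  have cross: "sin t * (\<rho>' t * sin t + \<rho> t * cos t) - cos t * (\<rho> t * sin t - \<rho>' t * cos t) = \<rho>' t"
    using sin_cos_squared_add[of t] by algebra
  have "\<rho>' t / N = (sin t * (\<rho>' t * sin t + \<rho> t * cos t) - cos t * (\<rho> t * sin t - \<rho>' t * cos t)) / N"
    by (simp only: cross)
  also have "\<dots> = fst (xdir t) * snd (nu \<rho> \<rho>' t) - snd (xdir t) * fst (nu \<rho> \<rho>' t)"
    by (simp add: xdir_def nu_def flip: N_def) (simp add: diff_divide_distrib right_diff_distrib)
  also have "\<dots> = 0"
    by (simp add: assms)
  finally show ?thesis
    by (cases "N = 0") (auto simp: N_def)
qed

lemma nu_eq_xdir_if_deriv_eq_0:
  assumes "0 < \<rho> t" "\<rho>' t = 0"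
  shows "nu \<rho> \<rho>' t = xdir t"
  using assms by (simp add: nu_def xdir_def)

lemma mC_eq_imp_xdir_parallel_nu:
  assumes "mC n\<^sub>1 \<rho> \<rho>' t = mC n\<^sub>2 \<rho> \<rho>' t" "n\<^sub>1 \<noteq> n\<^sub>2" "n\<^sub>1 \<noteq> 0" "n\<^sub>2 \<noteq> 0"
  shows "\<exists>k. xdir t = k *\<^sub>R nu \<rho> \<rho>' t"
proof -
  define P where "P n = Phi n (xdir t \<bullet> nu \<rho> \<rho>' t)" for n
  define c where "c = 1/n\<^sub>1 - 1/n\<^sub>2"
  define K where "K = P n\<^sub>1/n\<^sub>1 - P n\<^sub>2/n\<^sub>2"
  have "c \<noteq> 0"
    using assms(2-4) by (simp add: c_def field_simps)
  have eq: "c *\<^sub>R xdir t = K *\<^sub>R nu \<rho> \<rho>' t"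
    using assms(1) by (simp add: mC_def P_def c_def K_def algebra_simps)
  have "xdir t = inverse c *\<^sub>R (c *\<^sub>R xdir t)"
    using \<open>c \<noteq> 0\<close> by simp
  also have "\<dots> = (K / c) *\<^sub>R nu \<rho> \<rho>' t"
    by (simp add: eq divide_inverse mult.commute)
  finally show ?thesis ..
qed

lemma mC_eq_vertical_imp_axis:
  assumes t: "-(pi/2) < t" "t < pi/2" and "0 < \<rho> t" "1 \<le> n\<^sub>1" "n\<^sub>1 < n\<^sub>2"
    and eq: "mC n\<^sub>1 \<rho> \<rho>' t = mC n\<^sub>2 \<rho> \<rho>' t" and vertical: "fst (mC n\<^sub>1 \<rho> \<rho>' t) = 0"
  shows "t = 0 \<and> \<rho>' t = 0"
proof -
  have "\<rho>' t = 0"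
    using mC_eq_imp_xdir_parallel_nu[OF eq] assms xdir_parallel_nu_imp_deriv_eq_0 by force
  then have nu: "nu \<rho> \<rho>' t = xdir t"
    using nu_eq_xdir_if_deriv_eq_0 \<open>0 < \<rho> t\<close> by blast
  have "xdir t \<bullet> xdir t = 1"
    by (simp add: dot_square_norm)
  then have "mC n\<^sub>1 \<rho> \<rho>' t = ((1 - Phi n\<^sub>1 1) / n\<^sub>1) *\<^sub>R xdir t"
    by (simp add: mC_def nu diff_divide_distrib scaleR_diff_left scaleR_diff_right)
  moreover have "mC n\<^sub>1 \<rho> \<rho>' t \<noteq> 0"
    using norm_mC[of \<rho> t n\<^sub>1 \<rho>'] assms by auto
  ultimately have "sin t = 0"
    using vertical by (auto simp: xdir_def zero_prod_def)
  with t have "t = 0"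
    using sin_eq_0_pi by auto
  with \<open>\<rho>' t = 0\<close> show ?thesis
    by simp
qed

lemma scaleR_unit_vector_cancel:
  fixes u v :: "'a::real_normed_vector"
  assumes "c *\<^sub>R u = d *\<^sub>R v" "norm u = 1" "norm v = 1" "0 < c" "0 < d"
  shows "c = d \<and> u = v"
proof -
  have "c = d"
    using arg_cong[OF assms(1), of norm] assms(2-) by simp
  with assms show ?thesis
    by simp
qed

lemma has_vector_derivative_reparametrization_at_fixed_point:
  assumes "\<forall>s\<in>S. f s = g (\<phi> s)" "\<phi> ` S \<subseteq> S" "t \<in> S" "\<phi> t = t"
    and "(\<phi> has_real_derivative \<phi>') (at t within S)"
    and "(g has_vector_derivative G) (at t within S)"
  shows "(f has_vector_derivative \<phi>' *\<^sub>R G) (at t within S)"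
proof -
  have "(g has_vector_derivative G) (at (\<phi> t) within \<phi> ` S)"
    using has_vector_derivative_within_subset[OF assms(6,2)] assms(4) by simp
  with assms(5) have comp: "(g \<circ> \<phi> has_vector_derivative \<phi>' *\<^sub>R G) (at t within S)"
    by (intro vector_diff_chain_within) (simp_all add: has_real_derivative_iff_has_vector_derivative)
  show ?thesis
    by (rule has_vector_derivative_transform[OF assms(3) _ comp]) (use assms(1) in simp)
qed

lemma fst_eq_0_if_common_normal_with_evec:
  fixes m F :: "real \<times> real"
  assumes "F \<noteq> 0" "evec \<bullet> F = 0" "m \<bullet> F = 0"
  shows "fst m = 0"
  using assms by (cases m; cases F) (auto simp: evec_def zero_prod_def)

lemma fC_tangency_imp_axis:
  assumes D: "-(pi/2) < a" "a < b" "b < pi/2" and t: "t \<in> {a..b}"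
    and idx: "1 < n\<^sub>r" "n\<^sub>r < n\<^sub>b"
    and pos: "\<forall>s\<in>{a..b}. 0 < \<rho> s \<and> 0 < dC n\<^sub>r C\<^sub>r \<rho> \<rho>' s \<and> 0 < dC n\<^sub>b C\<^sub>b \<rho> \<rho>' s"
    and \<rho>_deriv: "(\<rho> has_real_derivative \<rho>' t) (at t within {a..b})"
    and F\<^sub>r: "(fC n\<^sub>r C\<^sub>r \<rho> \<rho>' has_vector_derivative c *\<^sub>R F) (at t within {a..b})"
    and F\<^sub>b: "(fC n\<^sub>b C\<^sub>b \<rho> \<rho>' has_vector_derivative F) (at t within {a..b})"
    and "F \<noteq> 0" "c \<noteq> 0"
    and meet: "fC n\<^sub>r C\<^sub>r \<rho> \<rho>' t = fC n\<^sub>b C\<^sub>b \<rho> \<rho>' t"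
  shows "t = 0 \<and> \<rho>' t = 0 \<and> dC n\<^sub>r C\<^sub>r \<rho> \<rho>' t = dC n\<^sub>b C\<^sub>b \<rho> \<rho>' t"
proof -
  define m where "m = mC n\<^sub>r \<rho> \<rho>' t"
  have "0 < \<rho> t"
    using pos t by blast
  have "dC n\<^sub>r C\<^sub>r \<rho> \<rho>' t *\<^sub>R m = dC n\<^sub>b C\<^sub>b \<rho> \<rho>' t *\<^sub>R mC n\<^sub>b \<rho> \<rho>' t"
    using meet by (simp add: fC_def m_def)
  moreover have "norm m = 1" "norm (mC n\<^sub>b \<rho> \<rho>' t) = 1"
    using norm_mC \<open>0 < \<rho> t\<close> idx by (simp_all add: m_def)
  ultimately have d_m_eq: "dC n\<^sub>r C\<^sub>r \<rho> \<rho>' t = dC n\<^sub>b C\<^sub>b \<rho> \<rho>' t \<and> m = mC n\<^sub>b \<rho> \<rho>' t"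
    using pos t by (intro scaleR_unit_vector_cancel) auto
  have "c * ((n\<^sub>r *\<^sub>R m - evec) \<bullet> F) = 0"
    unfolding m_def using fC_velocity_orthogonal[OF D(2) t idx(1) _ \<rho>_deriv F\<^sub>r] pos by simp
  then have r: "(n\<^sub>r *\<^sub>R m - evec) \<bullet> F = 0"
    using \<open>c \<noteq> 0\<close> by simp
  have b: "(n\<^sub>b *\<^sub>R m - evec) \<bullet> F = 0"
    using d_m_eq fC_velocity_orthogonal[OF D(2) t _ _ \<rho>_deriv F\<^sub>b] pos idx by simp
  \<comment> \<open>Subtracting the two Fermat relations, \<open>m\<close> and \<open>evec\<close> are both orthogonal to \<open>F\<close>.\<close>
  have "(n\<^sub>b - n\<^sub>r) * (m \<bullet> F) = 0"
    using r b by (simp add: inner_diff_left algebra_simps)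
  then have m_F: "m \<bullet> F = 0"
    using idx by simp
  then have "evec \<bullet> F = 0"
    using r by (simp add: inner_diff_left)
  then have "fst m = 0"
    using fst_eq_0_if_common_normal_with_evec[OF \<open>F \<noteq> 0\<close> _ m_F] by blast
  moreover have "-(pi/2) < t" "t < pi/2"
    using D t by auto
  ultimately show ?thesis
    using mC_eq_vertical_imp_axis[of t \<rho> n\<^sub>r n\<^sub>b \<rho>'] \<open>0 < \<rho> t\<close> less_imp_le[OF idx(1)] idx(2) d_m_eq
    unfolding m_def by blast
qed

theorem lemma5p4:
  fixes a b n_r n_b C_r C_b :: real
    and \<rho> \<rho>' \<rho>'' \<phi> :: "real \<Rightarrow> real"
  assumes D: "-(pi/2) < a" "a < b" "b < pi/2"
    and idx: "1 < n_r" "n_r < n_b"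
    and rho_pos: "\<forall>t\<in>{a..b}. 0 < \<rho> t"
    and rho_d1: "\<forall>t\<in>{a..b}. (\<rho> has_real_derivative \<rho>' t) (at t within {a..b})"
    and rho_d2: "\<forall>t\<in>{a..b}. (\<rho>' has_real_derivative \<rho>'' t) (at t within {a..b})"
    and rho_C2: "continuous_on {a..b} \<rho>''"
    and d_pos: "\<forall>t\<in>{a..b}. 0 < dC n_r C_r \<rho> \<rho>' t \<and> 0 < dC n_b C_b \<rho> \<rho>' t"
    and f_reg: "regular_curve_on {a..b} (fC n_r C_r \<rho> \<rho>')"
               "regular_curve_on {a..b} (fC n_b C_b \<rho> \<rho>')"
    and phi_maps: "\<phi> ` {a..b} \<subseteq> {a..b}"
    and phi_C1: "C1_on {a..b} \<phi>"
    and match: "\<forall>t\<in>{a..b}. fC n_r C_r \<rho> \<rho>' t = fC n_b C_b \<rho> \<rho>' (\<phi> t)"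
  shows "0 \<in> {a..b} \<and> \<phi> 0 = 0 \<and> dC n_b C_b \<rho> \<rho>' 0 = dC n_r C_r \<rho> \<rho>' 0 \<and> \<rho>' 0 = 0"
proof -
  obtain \<phi>' where \<phi>': "\<forall>t\<in>{a..b}. (\<phi> has_real_derivative \<phi>' t) (at t within {a..b})"
    using phi_C1 unfolding C1_on_def by blast
  obtain F\<^sub>r where F\<^sub>r: "\<forall>t\<in>{a..b}. (fC n_r C_r \<rho> \<rho>' has_vector_derivative F\<^sub>r t) (at t within {a..b}) \<and> F\<^sub>r t \<noteq> 0"
    using f_reg(1) unfolding regular_curve_on_def by blast
  obtain F\<^sub>b where F\<^sub>b: "\<forall>t\<in>{a..b}. (fC n_b C_b \<rho> \<rho>' has_vector_derivative F\<^sub>b t) (at t within {a..b}) \<and> F\<^sub>b t \<noteq> 0"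
    using f_reg(2) unfolding regular_curve_on_def by blast
  have "continuous_on {a..b} \<phi>"
    using \<phi>' DERIV_continuous continuous_on_eq_continuous_within by blast
  then obtain t\<^sub>0 where t\<^sub>0: "t\<^sub>0 \<in> {a..b}" "\<phi> t\<^sub>0 = t\<^sub>0"
    using brouwer[of "{a..b}" \<phi>] phi_maps D(2) by auto
  have F\<^sub>b_t\<^sub>0: "(fC n_b C_b \<rho> \<rho>' has_vector_derivative F\<^sub>b t\<^sub>0) (at t\<^sub>0 within {a..b})" "F\<^sub>b t\<^sub>0 \<noteq> 0"
    using F\<^sub>b t\<^sub>0(1) by auto
  have F\<^sub>r_t\<^sub>0: "(fC n_r C_r \<rho> \<rho>' has_vector_derivative \<phi>' t\<^sub>0 *\<^sub>R F\<^sub>b t\<^sub>0) (at t\<^sub>0 within {a..b})"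
    using has_vector_derivative_reparametrization_at_fixed_point[OF match phi_maps t\<^sub>0] \<phi>' F\<^sub>b t\<^sub>0(1)
    by blast
  then have "\<phi>' t\<^sub>0 \<noteq> 0"
    using vector_derivative_unique_within_closed_interval[of a b t\<^sub>0, unfolded cbox_interval, OF D(2) t\<^sub>0(1)]
      F\<^sub>r t\<^sub>0(1) by force
  moreover have "\<forall>s\<in>{a..b}. 0 < \<rho> s \<and> 0 < dC n_r C_r \<rho> \<rho>' s \<and> 0 < dC n_b C_b \<rho> \<rho>' s"
    using rho_pos d_pos by blast
  moreover have "fC n_r C_r \<rho> \<rho>' t\<^sub>0 = fC n_b C_b \<rho> \<rho>' t\<^sub>0"
    using match t\<^sub>0 by auto
  ultimately have "t\<^sub>0 = 0 \<and> \<rho>' t\<^sub>0 = 0 \<and> dC n_r C_r \<rho> \<rho>' t\<^sub>0 = dC n_b C_b \<rho> \<rho>' t\<^sub>0"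
    using fC_tangency_imp_axis[OF D t\<^sub>0(1) idx _ _ F\<^sub>r_t\<^sub>0 F\<^sub>b_t\<^sub>0] rho_d1 t\<^sub>0(1) by blast
  with t\<^sub>0 show ?thesis
    by auto
qed

end
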